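(* Let $M$ be a tame paving matroid of rank $n$ with set of dependent hyperplanes $\mathcal{L}$, and let $\mathcal{Q}=\{Q_1,\ldots,Q_k\}$ be a nice partition of $\mathcal{L}$. Let $\operatorname{rank}$ denote the rank function of $M(\mathcal{Q})$. Then (i) $\operatorname{rank}(l)=n-1$ for every $l\in\mathcal{L}$; and (ii) if $l_1,l_2\in\mathcal{L}$ lie in different parts of $\mathcal{Q}$, then $\operatorname{rank}(l_1\cup l_2)=n$.
   Context: A matroid of rank $n$ is paving ($n$-paving) if every circuit has size $n$ or $n+1$; a dependent hyperplane is a maximal subset of size at least $n$ all of whose $n$-subsets are circuits; tame means any three distinct dependent hyperplanes have empty intersection. For a partition $\mathcal{Q}$ of $\mathcal{L}$, set $H_i=\bigcup_{l\in Q_i}l$; $M(\mathcal{Q})$ is the matroid on the ground set of $M$ whose circuits are (Type 1) the $(n-1)$-subsets contained in $H_i\cap H_j$ for some $i\ne j$, (Type 2) the $n$-subsets of some $H_i$ containing no Type 1 set, (Type 3) the $(n+1)$-subsets containing no Type 1 or Type 2 set. For $L\subseteq\mathcal{L}$ with $|L|\ge2$, $M^L$ is the $n$-paving matroid on $\bigcup_{l\in L}l$ whose set of dependent hyperplanes is $L$. An $n$-paving matroid $N$ on $E$ is liftable if for every tuple $(\gamma_e)_{e\in E}$ in $\mathbb{C}^n$ spanning a hyperplane $H$ and every $q\notin H$ there exist scalars $z_e$ with $(\gamma_e+z_eq)$ in the circuit variety of $N$ (tuples whose restriction to every dependent set of $N$ is linearly dependent) and not all in a common hyperplane. $\mathcal{Q}$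 is nice if (i) $M^{Q_i}$ is not liftable whenever $|Q_i|\ge2$, and (ii) no $l\notin Q_i$ satisfies $l\subseteq\bigcup_{l'\in Q_i}l'$. *)

theory Defs
  imports "HOL-Analysis.Analysis" "HOL-Library.Disjoint_Sets"
begin

definition matroid_circuits :: "'e set \<Rightarrow> 'e set set \<Rightarrow> bool" where
  "matroid_circuits E C \<longleftrightarrow> finite E \<and> (\<forall>c\<in>C. c \<subseteq> E) \<and> {} \<notin> C
     \<and> (\<forall>c1\<in>C. \<forall>c2\<in>C. c1 \<subseteq> c2 \<longrightarrow> c1 = c2)
     \<and> (\<forall>c1\<in>C. \<forall>c2\<in>C. \<forall>e. c1 \<noteq> c2 \<and> e \<in> c1 \<inter> c2 \<longrightarrow> (\<exists>c3\<in>C. c3 \<subseteq> (c1 \<union> c2) - {e}))"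

definition mindep :: "'e set set \<Rightarrow> 'e set \<Rightarrow> bool" where
  "mindep C Y \<longleftrightarrow> finite Y \<and> \<not> (\<exists>c\<in>C. c \<subseteq> Y)"

definition mrank :: "'e set set \<Rightarrow> 'e set \<Rightarrow> nat" where
  "mrank C X = Max (card ` {Y. Y \<subseteq> X \<and> mindep C Y})"

definition mdependent :: "'e set \<Rightarrow> 'e set set \<Rightarrow> 'e set \<Rightarrow> bool" where
  "mdependent E C D \<longleftrightarrow> D \<subseteq> E \<and> (\<exists>c\<in>C. c \<subseteq> D)"

definition paving :: "nat \<Rightarrow> 'e set \<Rightarrow> 'e set set \<Rightarrow> bool" where
  "paving n E C \<longleftrightarrow> matroid_circuits E C \<and> mrank C E = n
     \<and> (\<forall>c\<in>C. card c = n \<or> card c = n + 1)"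

definition all_nsubsets_circuits :: "nat \<Rightarrow> 'e set set \<Rightarrow> 'e set \<Rightarrow> bool" where
  "all_nsubsets_circuits n C H \<longleftrightarrow> (\<forall>S. S \<subseteq> H \<and> card S = n \<longrightarrow> S \<in> C)"

definition dep_hyperplane :: "nat \<Rightarrow> 'e set \<Rightarrow> 'e set set \<Rightarrow> 'e set \<Rightarrow> bool" where
  "dep_hyperplane n E C H \<longleftrightarrow> H \<subseteq> E \<and> card H \<ge> n \<and> all_nsubsets_circuits n C H
     \<and> (\<forall>H'. H \<subseteq> H' \<and> H' \<subseteq> E \<and> card H' \<ge> n \<and> all_nsubsets_circuits n C H' \<longrightarrow> H' = H)"

definition dep_hyps :: "nat \<Rightarrow> 'e set \<Rightarrow> 'e set set \<Rightarrow> 'e set set" where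
  "dep_hyps n E C = {H. dep_hyperplane n E C H}"

definition tame :: "nat \<Rightarrow> 'e set \<Rightarrow> 'e set set \<Rightarrow> bool" where
  "tame n E C \<longleftrightarrow> (\<forall>H1\<in>dep_hyps n E C. \<forall>H2\<in>dep_hyps n E C. \<forall>H3\<in>dep_hyps n E C.
      H1 \<noteq> H2 \<and> H1 \<noteq> H3 \<and> H2 \<noteq> H3 \<longrightarrow> H1 \<inter> H2 \<inter> H3 = {})"

definition MQ_type1 :: "nat \<Rightarrow> 'e set \<Rightarrow> 'e set set set \<Rightarrow> 'e set set" where
  "MQ_type1 n E Q = {S. S \<subseteq> E \<and> card S = n - 1 \<and>
      (\<exists>Qi\<in>Q. \<exists>Qj\<in>Q. Qi \<noteq> Qj \<and> S \<subseteq> \<Union>Qi \<inter> \<Union>Qj)}"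

definition MQ_type2 :: "nat \<Rightarrow> 'e set \<Rightarrow> 'e set set set \<Rightarrow> 'e set set" where
  "MQ_type2 n E Q = {S. S \<subseteq> E \<and> card S = n \<and> (\<exists>Qi\<in>Q. S \<subseteq> \<Union>Qi)
      \<and> \<not> (\<exists>T\<in>MQ_type1 n E Q. T \<subseteq> S)}"

definition MQ_type3 :: "nat \<Rightarrow> 'e set \<Rightarrow> 'e set set set \<Rightarrow> 'e set set" where
  "MQ_type3 n E Q = {S. S \<subseteq> E \<and> card S = n + 1
      \<and> \<not> (\<exists>T\<in>MQ_type1 n E Q \<union> MQ_type2 n E Q. T \<subseteq> S)}"

definition MQ_circuits :: "nat \<Rightarrow> 'e set \<Rightarrow> 'e set set set \<Rightarrow> 'e set set" where
  "MQ_circuits n E Q = MQ_type1 n E Q \<union> MQ_type2 n E Q \<union> MQ_type3 n E Q"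

text \<open>The n-paving matroid on the union of L whose dependent hyperplanes are the members of L:
its circuits are the n-subsets of members of L and the (n+1)-subsets of the ground set
containing no such n-subset.\<close>
definition paving_of_hyps_circuits :: "nat \<Rightarrow> 'e set set \<Rightarrow> 'e set set" where
  "paving_of_hyps_circuits n L =
     {S. S \<subseteq> \<Union>L \<and> card S = n \<and> (\<exists>l\<in>L. S \<subseteq> l)}
   \<union> {S. S \<subseteq> \<Union>L \<and> card S = n + 1 \<and> \<not> (\<exists>T. T \<subseteq> S \<and> card T = n \<and> (\<exists>l\<in>L. T \<subseteq> l))}"

definition tuple_dependent :: "('e \<Rightarrow> complex^'n) \<Rightarrow> 'e set \<Rightarrow> bool" where
  "tuple_dependent v D \<longleftrightarrow> \<not> inj_on v D \<or> vec.dependent (v ` D)"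

definition circuit_variety :: "'e set \<Rightarrow> 'e set set \<Rightarrow> ('e \<Rightarrow> complex^'n) set" where
  "circuit_variety E C = {v. \<forall>D. mdependent E C D \<longrightarrow> tuple_dependent v D}"

definition liftable :: "'n::finite itself \<Rightarrow> 'e set \<Rightarrow> 'e set set \<Rightarrow> bool" where
  "liftable _ E C \<longleftrightarrow>
     (\<forall>(\<gamma> :: 'e \<Rightarrow> complex^'n) q.
        vec.dim (vec.span (\<gamma> ` E)) = CARD('n) - 1 \<and> q \<notin> vec.span (\<gamma> ` E) \<longrightarrow>
        (\<exists>z :: 'e \<Rightarrow> complex.
           (\<lambda>e. \<gamma> e + z e *s q) \<in> circuit_variety E C
         \<and> vec.span ((\<lambda>e. \<gamma> e + z e *s q) ` E) = UNIV))"

definition nice :: "'n::finite itself \<Rightarrow> nat \<Rightarrow> 'e set set \<Rightarrow> 'e set set set \<Rightarrow> bool" where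
  "nice T n L Q \<longleftrightarrow>
     (\<forall>Qi\<in>Q. card Qi \<ge> 2 \<longrightarrow> \<not> liftable T (\<Union>Qi) (paving_of_hyps_circuits n Qi))
   \<and> (\<forall>Qi\<in>Q. \<forall>l\<in>L. l \<notin> Qi \<longrightarrow> \<not> l \<subseteq> \<Union>Qi)"

end

theory Submission
  imports Defs
begin

(* Let l be a dependent hyperplane in the part Q_a. The key is an (n-1)-subset S of l lying in
   no intersection H_i Int H_j of two distinct parts, i.e. containing no Type 1 circuit.
   For n <= 2 every S qualifies: two dependent hyperplanes that meet (for n = 1, any two)
   coincide, so distinct parts have disjoint unions. For n >= 3, if every (n-1)-subset of l
   lay in such an intersection, any two points of l would lie in a common H_x with
   Q_x <> Q_a; by tameness no point of H_a lies in two further unions H_x, so this Q_x is the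
   same for all pairs, and l would be covered by H_x, contradicting niceness.
   S is independent in M(Q), while every n-subset of l, being inside H_a, is dependent; hence
   rank l = n - 1. For l_1 in Q_i and l_2 in Q_j, niceness gives a point q of l_2 outside H_i,
   and S + q (with S taken in l_1) is an independent n-set; (n+1)-sets are always dependent. *)

lemma matroid_circuits_elim:
  assumes "matroid_circuits E C" "c1 \<in> C" "c2 \<in> C" "c1 \<noteq> c2" "e \<in> c1" "e \<in> c2"
  obtains c3 where "c3 \<in> C" "c3 \<subseteq> c1 \<union> c2 - {e}"
proof -
  have "\<forall>c1\<in>C. \<forall>c2\<in>C. \<forall>e. c1 \<noteq> c2 \<and> e \<in> c1 \<inter> c2 \<longrightarrow> (\<exists>c3\<in>C. c3 \<subseteq> (c1 \<union> c2) - {e})"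
    using assms(1) unfolding matroid_circuits_def by (elim conjE)
  then show ?thesis using assms(2-6) that by blast
qed

lemma mindep_card_le:
  assumes "mindep C Y" "\<And>S. S \<subseteq> Y \<Longrightarrow> card S = k + 1 \<Longrightarrow> \<exists>c\<in>C. c \<subseteq> S"
  shows "card Y \<le> k"
proof (rule ccontr)
  assume "\<not> card Y \<le> k"
  then have "k + 1 \<le> card Y" by simp
  then obtain S where "S \<subseteq> Y" "card S = k + 1" by (rule obtain_subset_with_card_n)
  then obtain c where "c \<in> C" "c \<subseteq> Y" using assms(2) by blast
  then show False using assms(1) unfolding mindep_def by blast
qed

lemma mrank_eqI:
  assumes "finite X" "S \<subseteq> X" "mindep C S" "card S = k"
    and "\<And>Y. Y \<subseteq> X \<Longrightarrow> mindep C Y \<Longrightarrow> card Y \<le> k"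
  shows "mrank C X = k"
proof -
  have "finite {Y. Y \<subseteq> X \<and> mindep C Y}" using assms(1) by simp
  then show ?thesis unfolding mrank_def
    by (rule Max_eqI[OF finite_imageI]) (use assms in auto)
qed

lemma dep_hypsD:
  assumes "l \<in> dep_hyps n E C"
  shows "l \<subseteq> E" "n \<le> card l" "all_nsubsets_circuits n C l"
    and "\<And>H. l \<subseteq> H \<Longrightarrow> H \<subseteq> E \<Longrightarrow> n \<le> card H \<Longrightarrow> all_nsubsets_circuits n C H \<Longrightarrow> H = l"
  using assms unfolding dep_hyps_def dep_hyperplane_def by auto

lemma dep_hyps_eqI:
  assumes "finite E" "l \<in> dep_hyps n E C" "l' \<in> dep_hyps n E C"
    and "all_nsubsets_circuits n C (l \<union> l')"
  shows "l = l'"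
proof -
  have "l \<union> l' \<subseteq> E" using dep_hypsD(1) assms(2,3) by blast
  moreover have "n \<le> card (l \<union> l')"
    using dep_hypsD(2)[OF assms(2)] card_mono[of "l \<union> l'" l] finite_subset[OF calculation assms(1)]
    by simp
  ultimately have "l \<union> l' = l" "l \<union> l' = l'"
    using dep_hypsD(4)[OF assms(2)] dep_hypsD(4)[OF assms(3)] assms(4) by auto
  then show ?thesis by blast
qed

lemma dep_hyps_rank1_eq:
  assumes "finite E" "l \<in> dep_hyps 1 E C" "l' \<in> dep_hyps 1 E C"
  shows "l = l'"
proof (rule dep_hyps_eqI[OF assms])
  show "all_nsubsets_circuits 1 C (l \<union> l')"
    unfolding all_nsubsets_circuits_def
  proof (intro allI impI)
    fix S assume "S \<subseteq> l \<union> l' \<and> card S = 1"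
    then obtain x where "S = {x}" "x \<in> l \<union> l'" by (auto simp: card_1_singleton_iff)
    then show "S \<in> C"
      using dep_hypsD(3)[OF assms(2)] dep_hypsD(3)[OF assms(3)]
      unfolding all_nsubsets_circuits_def by auto
  qed
qed

lemma paving_circuit_card_ge:
  "paving n E C \<Longrightarrow> c \<in> C \<Longrightarrow> n \<le> card c"
  unfolding paving_def by (metis le_add1 order_refl)

lemma paving_rank2_circuit_trans:
  assumes pav: "paving 2 E C" and "{a, p} \<in> C" "{p, b} \<in> C" "a \<noteq> b" "a \<noteq> p" "b \<noteq> p"
  shows "{a, b} \<in> C"
proof -
  have mc: "matroid_circuits E C" using pav unfolding paving_def by simp
  have ne: "{a, p} \<noteq> {p, b}" using assms(4-6) by auto
  obtain c where c: "c \<in> C" "c \<subseteq> {a, p} \<union> {p, b} - {p}"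
    by (rule matroid_circuits_elim[OF mc assms(2,3) ne, of p]) simp_all
  have "c \<subseteq> {a, b}" using c(2) by blast
  moreover have "card {a, b} \<le> card c"
    using paving_circuit_card_ge[OF pav c(1)] assms(4) by simp
  ultimately have "c = {a, b}" by (intro card_seteq) simp_all
  with c(1) show ?thesis by simp
qed

lemma dep_hyps_rank2_meet_eq:
  assumes pav: "paving 2 E C" and l: "l \<in> dep_hyps 2 E C" and l': "l' \<in> dep_hyps 2 E C"
    and p: "p \<in> l" "p \<in> l'"
  shows "l = l'"
proof -
  have "finite E" using pav unfolding paving_def matroid_circuits_def by simp
  moreover have "all_nsubsets_circuits 2 C (l \<union> l')"
    unfolding all_nsubsets_circuits_def
  proof (intro allI impI)
    have in_l: "S \<in> C" if "S \<subseteq> l" "card S = 2" for S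
      using dep_hypsD(3)[OF l] that unfolding all_nsubsets_circuits_def by blast
    have in_l': "S \<in> C" if "S \<subseteq> l'" "card S = 2" for S
      using dep_hypsD(3)[OF l'] that unfolding all_nsubsets_circuits_def by blast
    have cross: "{x, y} \<in> C" if "x \<in> l - l'" "y \<in> l' - l" for x y
      using paving_rank2_circuit_trans[OF pav in_l[of "{x, p}"] in_l'[of "{p, y}"]] that p
      by (auto simp: card_insert_if)
    fix S assume S: "S \<subseteq> l \<union> l' \<and> card S = 2"
    then obtain x y where xy: "S = {x, y}" "x \<noteq> y" by (auto simp: card_2_iff)
    consider "S \<subseteq> l" | "S \<subseteq> l'" | "x \<in> l - l'" "y \<in> l' - l" | "y \<in> l - l'" "x \<in> l' - l"
      using S xy by blast
    then show "S \<in> C"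
    proof cases
      case 1
      then show ?thesis using in_l S by blast
    next
      case 2
      then show ?thesis using in_l' S by blast
    next
      case 3
      then show ?thesis using cross xy(1) by simp
    next
      case 4
      then show ?thesis using cross[of y x] xy(1) by (simp add: insert_commute)
    qed
  qed
  ultimately show ?thesis using dep_hyps_eqI l l' by blast
qed

lemma partition_on_parts_eq:
  "partition_on A P \<Longrightarrow> X \<in> P \<Longrightarrow> Y \<in> P \<Longrightarrow> a \<in> X \<Longrightarrow> a \<in> Y \<Longrightarrow> X = Y"
  using disjointD[OF partition_onD2] by blast

definition within_two_parts :: "'e set set set \<Rightarrow> 'e set \<Rightarrow> bool" where
  "within_two_parts Q S \<longleftrightarrow> (\<exists>Qi\<in>Q. \<exists>Qj\<in>Q. Qi \<noteq> Qj \<and> S \<subseteq> \<Union>Qi \<inter> \<Union>Qj)"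

lemma MQ_type1_iff:
  "S \<in> MQ_type1 n E Q \<longleftrightarrow> S \<subseteq> E \<and> card S = n - 1 \<and> within_two_parts Q S"
  unfolding MQ_type1_def within_two_parts_def by blast

lemma within_two_partsI:
  "Qi \<in> Q \<Longrightarrow> Qj \<in> Q \<Longrightarrow> Qi \<noteq> Qj \<Longrightarrow> S \<subseteq> \<Union>Qi \<inter> \<Union>Qj \<Longrightarrow> within_two_parts Q S"
  unfolding within_two_parts_def by blast

lemma within_two_parts_other_part:
  assumes "within_two_parts Q S"
  obtains Qx where "Qx \<in> Q" "Qx \<noteq> Qa" "S \<subseteq> \<Union>Qx"
  using assms unfolding within_two_parts_def by blast

lemma MQ_circuit_card_le_cases:
  assumes "c \<in> MQ_circuits n E Q" "card c \<le> n"
  shows "c \<in> MQ_type1 n E Q \<or> c \<in> MQ_type2 n E Q"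
  using assms unfolding MQ_circuits_def MQ_type3_def by auto

lemma ex_MQ_circuit_subset_card_Suc:
  assumes "S \<subseteq> E" "card S = n + 1"
  shows "\<exists>c\<in>MQ_circuits n E Q. c \<subseteq> S"
proof (cases "\<exists>T\<in>MQ_type1 n E Q \<union> MQ_type2 n E Q. T \<subseteq> S")
  case False
  then have "S \<in> MQ_type3 n E Q" using assms unfolding MQ_type3_def by simp
  then show ?thesis unfolding MQ_circuits_def by blast
qed (auto simp: MQ_circuits_def)

lemma ex_MQ_circuit_subset_within_part:
  assumes "S \<subseteq> E" "card S = n" "Qi \<in> Q" "S \<subseteq> \<Union>Qi"
  shows "\<exists>c\<in>MQ_circuits n E Q. c \<subseteq> S"
proof (cases "\<exists>T\<in>MQ_type1 n E Q. T \<subseteq> S")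
  case False
  then have "S \<in> MQ_type2 n E Q" using assms unfolding MQ_type2_def by blast
  then show ?thesis unfolding MQ_circuits_def by blast
qed (auto simp: MQ_circuits_def)

lemma mindep_MQ_if_not_within_two_parts:
  assumes "finite S" "card S = n - 1" "1 \<le> n" "\<not> within_two_parts Q S"
  shows "mindep (MQ_circuits n E Q) S"
  unfolding mindep_def
proof (intro conjI notI \<open>finite S\<close>)
  assume "\<exists>c\<in>MQ_circuits n E Q. c \<subseteq> S"
  then obtain c where c: "c \<in> MQ_circuits n E Q" "c \<subseteq> S" by blast
  have "card c < n" using card_mono[OF assms(1) c(2)] assms(2,3) by simp
  then have "c \<notin> MQ_type2 n E Q" unfolding MQ_type2_def by simp
  then have "c \<in> MQ_type1 n E Q"
    using MQ_circuit_card_le_cases[OF c(1)] \<open>card c < n\<close> by simp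
  then have "card c = card S" "within_two_parts Q c" using assms(2) by (auto simp: MQ_type1_iff)
  then show False using card_subset_eq[OF assms(1) c(2)] assms(4) by simp
qed

lemma insert_outside_part_not_MQ_type2:
  assumes "Qi \<in> Q" "S \<subseteq> \<Union>Qi" "\<not> within_two_parts Q S" "q \<notin> \<Union>Qi"
  shows "insert q S \<notin> MQ_type2 n E Q"
proof
  assume "insert q S \<in> MQ_type2 n E Q"
  then obtain Qx where x: "Qx \<in> Q" "insert q S \<subseteq> \<Union>Qx" unfolding MQ_type2_def by blast
  then have "Qx \<noteq> Qi" using assms(4) by auto
  moreover have "S \<subseteq> \<Union>Qi \<inter> \<Union>Qx" using assms(2) x(2) by blast
  ultimately have "within_two_parts Q S" using within_two_partsI[OF assms(1) x(1)] by simp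
  with assms(3) show False by simp
qed

locale tame_partitioned_paving =
  fixes n :: nat and E :: "'e set" and C :: "'e set set" and Q :: "'e set set set"
  assumes paving: "paving n E C"
    and tame: "tame n E C"
    and partition: "partition_on (dep_hyps n E C) Q"
    and dep_hyp_not_covered_by_other_part:
      "\<And>Qi l. Qi \<in> Q \<Longrightarrow> l \<in> dep_hyps n E C \<Longrightarrow> l \<notin> Qi \<Longrightarrow> \<not> l \<subseteq> \<Union>Qi"
    and rank_pos: "1 \<le> n"
begin

lemma finite_ground: "finite E"
  using paving unfolding paving_def matroid_circuits_def by simp

lemma dep_hyp_of_part: "Qi \<in> Q \<Longrightarrow> l \<in> Qi \<Longrightarrow> l \<in> dep_hyps n E C"
  using partition_onD1[OF partition] by blast

lemma part_of_dep_hyp: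
  assumes "l \<in> dep_hyps n E C"
  obtains Qi where "Qi \<in> Q" "l \<in> Qi"
  using partition_onD1[OF partition] assms by blast

lemma finite_dep_hyp: "l \<in> dep_hyps n E C \<Longrightarrow> finite l"
  using finite_subset[OF dep_hypsD(1) finite_ground] .

lemma part_unions_Int3_empty:
  assumes "Qa \<in> Q" "Qx \<in> Q" "Qy \<in> Q" "Qa \<noteq> Qx" "Qa \<noteq> Qy" "Qx \<noteq> Qy"
  shows "\<Union>Qa \<inter> \<Union>Qx \<inter> \<Union>Qy = {}"
proof (rule ccontr)
  assume "\<Union>Qa \<inter> \<Union>Qx \<inter> \<Union>Qy \<noteq> {}"
  then obtain p la lx ly where "la \<in> Qa" "lx \<in> Qx" "ly \<in> Qy" "p \<in> la" "p \<in> lx" "p \<in> ly"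
    by blast
  moreover from this have "la \<noteq> lx" "la \<noteq> ly" "lx \<noteq> ly"
    using partition_on_parts_eq[OF partition] assms by metis+
  moreover have "la \<in> dep_hyps n E C" "lx \<in> dep_hyps n E C" "ly \<in> dep_hyps n E C"
    using dep_hyp_of_part assms(1-3) calculation(1-3) by blast+
  ultimately show False using tame unfolding tame_def by blast
qed

lemma not_within_two_parts_if_rank_le2:
  assumes "n \<le> 2" "card S = n - 1"
  shows "\<not> within_two_parts Q S"
proof
  assume "within_two_parts Q S"
  then obtain Qx Qy where xy: "Qx \<in> Q" "Qy \<in> Q" "Qx \<noteq> Qy" "S \<subseteq> \<Union>Qx \<inter> \<Union>Qy"
    unfolding within_two_parts_def by blast
  have "\<exists>lx\<in>Qx. \<exists>ly\<in>Qy. lx = ly"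
  proof (cases "n = 1")
    case True
    have "Qx \<noteq> {}" "Qy \<noteq> {}" using partition_onD3[OF partition] xy(1,2) by auto
    then obtain lx ly where "lx \<in> Qx" "ly \<in> Qy" by blast
    then show ?thesis
      using dep_hyps_rank1_eq[OF finite_ground] dep_hyp_of_part xy(1,2) True by blast
  next
    case False
    then have n2: "n = 2" using assms(1) rank_pos by simp
    then obtain p where "p \<in> S" using assms(2) by (auto simp: card_1_singleton_iff)
    then obtain lx ly where "lx \<in> Qx" "ly \<in> Qy" "p \<in> lx" "p \<in> ly" using xy(4) by blast
    then show ?thesis
      using dep_hyps_rank2_meet_eq[of E C] paving dep_hyp_of_part xy(1,2) n2 by blast
  qed
  then show False using partition_on_parts_eq[OF partition xy(1,2)] xy(3) by blast
qed

lemma exists_subset_not_within_two_parts_rank_ge3: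
  assumes "3 \<le> n" "Qa \<in> Q" "l \<in> Qa"
  shows "\<exists>S\<subseteq>l. card S = n - 1 \<and> \<not> within_two_parts Q S"
proof (rule ccontr)
  assume "\<not> ?thesis"
  then have all_within: "within_two_parts Q S" if "S \<subseteq> l" "card S = n - 1" for S
    using that by blast
  have l: "l \<in> dep_hyps n E C" using dep_hyp_of_part assms(2,3) .
  have pair: "\<exists>Qx\<in>Q. Qx \<noteq> Qa \<and> p \<in> \<Union>Qx \<and> q \<in> \<Union>Qx" if "p \<in> l" "q \<in> l" for p q
  proof -
    have "card {p, q} \<le> 2" by (simp add: card_insert_if)
    then have "card {p, q} \<le> n - 1" using assms(1) by linarith
    moreover have "n - 1 \<le> card l" using dep_hypsD(2)[OF l] by simp
    moreover have "{p, q} \<subseteq> l" using that by simp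
    ultimately obtain S where S: "{p, q} \<subseteq> S" "S \<subseteq> l" "card S = n - 1"
      using exists_subset_between finite_dep_hyp[OF l] by metis
    then have "within_two_parts Q S" using all_within by simp
    then obtain Qx where x: "Qx \<in> Q" "Qx \<noteq> Qa" "S \<subseteq> \<Union>Qx"
      by (rule within_two_parts_other_part)
    have "p \<in> \<Union>Qx" "q \<in> \<Union>Qx" using S(1) x(3) by auto
    with x(1,2) show ?thesis by metis
  qed
  have "l \<noteq> {}" using dep_hypsD(2)[OF l] assms(1) by auto
  then obtain p where p: "p \<in> l" by blast
  have "p \<in> \<Union>Qa" using assms(3) p by (rule UnionI)
  obtain Qx where x: "Qx \<in> Q" "Qx \<noteq> Qa" "p \<in> \<Union>Qx" using pair[OF p p] by metis
  have "l \<subseteq> \<Union>Qx"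
  proof
    fix q assume "q \<in> l"
    then obtain Qy where y: "Qy \<in> Q" "Qy \<noteq> Qa" "p \<in> \<Union>Qy" "q \<in> \<Union>Qy"
      using pair[OF p] by metis
    have "Qy = Qx"
    proof (rule ccontr)
      assume "Qy \<noteq> Qx"
      then have "\<Union>Qa \<inter> \<Union>Qx \<inter> \<Union>Qy = {}"
        using part_unions_Int3_empty[OF assms(2) x(1) y(1)] x(2) y(2) by simp
      then show False using \<open>p \<in> \<Union>Qa\<close> x(3) y(3) by (metis IntI empty_iff)
    qed
    then show "q \<in> \<Union>Qx" using y(4) by simp
  qed
  moreover have "l \<notin> Qx" using partition_on_parts_eq[OF partition assms(2) x(1) assms(3)] x(2) by blast
  ultimately show False using dep_hyp_not_covered_by_other_part[OF x(1) l] by blast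
qed

lemma exists_subset_not_within_two_parts:
  assumes "l \<in> dep_hyps n E C"
  shows "\<exists>S\<subseteq>l. card S = n - 1 \<and> \<not> within_two_parts Q S"
proof (cases "n \<le> 2")
  case True
  have "n - 1 \<le> card l" using dep_hypsD(2)[OF assms] by simp
  then obtain S where "S \<subseteq> l" "card S = n - 1" by (rule obtain_subset_with_card_n)
  then show ?thesis using not_within_two_parts_if_rank_le2[OF True] by blast
next
  case False
  obtain Qa where "Qa \<in> Q" "l \<in> Qa" using part_of_dep_hyp[OF assms] .
  then show ?thesis using exists_subset_not_within_two_parts_rank_ge3 False by simp
qed

lemma not_within_two_parts_through_outside_point:
  assumes "Qi \<in> Q" "c - {q} \<subseteq> \<Union>Qi" "q \<in> c" "q \<notin> \<Union>Qi" "finite c" "card c = n - 1"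
  shows "\<not> within_two_parts Q c"
proof
  assume within: "within_two_parts Q c"
  then have "\<not> n \<le> 2" using not_within_two_parts_if_rank_le2 assms(6) by blast
  obtain Qx Qy where xy: "Qx \<in> Q" "Qy \<in> Q" "Qx \<noteq> Qy" "c \<subseteq> \<Union>Qx \<inter> \<Union>Qy"
    using within unfolding within_two_parts_def by blast
  have "q \<in> \<Union>Qx" "q \<in> \<Union>Qy" using xy(4) assms(3) by auto
  then have "Qi \<noteq> Qx" "Qi \<noteq> Qy" using assms(4) by auto
  have "card (c - {q}) \<noteq> 0" using assms(3,5,6) \<open>\<not> n \<le> 2\<close> by simp
  then obtain p where p: "p \<in> c - {q}" by (metis card.empty ex_in_conv)
  then have "p \<in> \<Union>Qi" using assms(2) by auto
  moreover have "p \<in> \<Union>Qx" "p \<in> \<Union>Qy" using p xy(4) by auto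
  ultimately show False
    using part_unions_Int3_empty[OF assms(1) xy(1,2) \<open>Qi \<noteq> Qx\<close> \<open>Qi \<noteq> Qy\<close> xy(3)]
    by (metis IntI empty_iff)
qed

lemma mindep_MQ_insert_outside_part:
  assumes "Qi \<in> Q" "S \<subseteq> \<Union>Qi" "finite S" "card S = n - 1" "\<not> within_two_parts Q S"
    and "q \<notin> \<Union>Qi"
  shows "mindep (MQ_circuits n E Q) (insert q S)"
  unfolding mindep_def
proof (intro conjI notI)
  show fin: "finite (insert q S)" using assms(3) by simp
  assume "\<exists>c\<in>MQ_circuits n E Q. c \<subseteq> insert q S"
  then obtain c where c: "c \<in> MQ_circuits n E Q" "c \<subseteq> insert q S" by blast
  have "q \<notin> S" using assms(2,6) by blast
  then have card_qS: "card (insert q S) = n" using assms(3,4) rank_pos by simp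
  then have "card c \<le> n" using card_mono[OF fin c(2)] by simp
  then consider "c \<in> MQ_type1 n E Q" | "c \<in> MQ_type2 n E Q"
    using MQ_circuit_card_le_cases[OF c(1)] by blast
  then show False
  proof cases
    case 1
    then have c1: "card c = n - 1" "within_two_parts Q c" by (simp_all add: MQ_type1_iff)
    show False
    proof (cases "q \<in> c")
      case True
      have "c - {q} \<subseteq> \<Union>Qi" using c(2) assms(2) by blast
      then show False
        using not_within_two_parts_through_outside_point[OF assms(1) _ True assms(6)
            finite_subset[OF c(2) fin] c1(1)] c1(2)
        by simp
    next
      case False
      then have "c \<subseteq> S" using c(2) by blast
      then have "c = S" using card_subset_eq[OF assms(3)] c1(1) assms(4) by simp
      then show False using assms(5) c1(2) by simp
    qed
  next
    case 2
    then have "card c = n" unfolding MQ_type2_def by simp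
    then have "c = insert q S" using card_subset_eq[OF fin c(2)] card_qS by simp
    with 2 show False using insert_outside_part_not_MQ_type2[OF assms(1,2,5,6)] by simp
  qed
qed

lemma mrank_MQ_dep_hyp:
  assumes "l \<in> dep_hyps n E C"
  shows "mrank (MQ_circuits n E Q) l = n - 1"
proof -
  obtain S where S: "S \<subseteq> l" "card S = n - 1" "\<not> within_two_parts Q S"
    using exists_subset_not_within_two_parts[OF assms] by blast
  obtain Qa where a: "Qa \<in> Q" "l \<in> Qa" using part_of_dep_hyp[OF assms] .
  have fin: "finite l" using finite_dep_hyp[OF assms] .
  show ?thesis
  proof (rule mrank_eqI[OF fin S(1) _ S(2)])
    show "mindep (MQ_circuits n E Q) S"
      using mindep_MQ_if_not_within_two_parts finite_subset[OF S(1) fin] S(2,3) rank_pos by blast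
  next
    fix Y assume Y: "Y \<subseteq> l" "mindep (MQ_circuits n E Q) Y"
    show "card Y \<le> n - 1"
    proof (rule mindep_card_le[OF Y(2)])
      fix T assume T: "T \<subseteq> Y" "card T = n - 1 + 1"
      show "\<exists>c\<in>MQ_circuits n E Q. c \<subseteq> T"
      proof (rule ex_MQ_circuit_subset_within_part[OF _ _ a(1)])
        show "T \<subseteq> E" using T(1) Y(1) dep_hypsD(1)[OF assms] by blast
        show "card T = n" using T(2) rank_pos by simp
        show "T \<subseteq> \<Union>Qa" using T(1) Y(1) a(2) by blast
      qed
    qed
  qed
qed

lemma mrank_MQ_Un_dep_hyps_of_distinct_parts:
  assumes "Qi \<in> Q" "Qj \<in> Q" "Qi \<noteq> Qj" "l1 \<in> Qi" "l2 \<in> Qj"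
  shows "mrank (MQ_circuits n E Q) (l1 \<union> l2) = n"
proof -
  have l1: "l1 \<in> dep_hyps n E C" and l2: "l2 \<in> dep_hyps n E C"
    using dep_hyp_of_part assms by blast+
  obtain S where S: "S \<subseteq> l1" "card S = n - 1" "\<not> within_two_parts Q S"
    using exists_subset_not_within_two_parts[OF l1] by blast
  have "l2 \<notin> Qi" using partition_on_parts_eq[OF partition assms(1,2)] assms(3,5) by blast
  then obtain q where q: "q \<in> l2" "q \<notin> \<Union>Qi"
    using dep_hyp_not_covered_by_other_part[OF assms(1) l2] by blast
  have S_part: "S \<subseteq> \<Union>Qi" using S(1) assms(4) by blast
  have fin: "finite (l1 \<union> l2)" using finite_dep_hyp l1 l2 by blast
  then have fin_S: "finite S" using S(1) finite_subset by blast
  show ?thesis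
  proof (rule mrank_eqI[OF fin])
    show "insert q S \<subseteq> l1 \<union> l2" using S(1) q(1) by blast
    show "mindep (MQ_circuits n E Q) (insert q S)"
      using mindep_MQ_insert_outside_part[OF assms(1) S_part fin_S S(2,3) q(2)] .
    have "q \<notin> S" using S_part q(2) by blast
    then show "card (insert q S) = n" using fin_S S(2) rank_pos by simp
  next
    fix Y assume Y: "Y \<subseteq> l1 \<union> l2" "mindep (MQ_circuits n E Q) Y"
    show "card Y \<le> n"
    proof (rule mindep_card_le[OF Y(2)])
      fix T assume "T \<subseteq> Y" "card T = n + 1"
      moreover have "T \<subseteq> E" using calculation(1) Y(1) dep_hypsD(1)[OF l1] dep_hypsD(1)[OF l2] by blast
      ultimately show "\<exists>c\<in>MQ_circuits n E Q. c \<subseteq> T" using ex_MQ_circuit_subset_card_Suc by blast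
    qed
  qed
qed

end

theorem lemma8p2:
  fixes E :: "'e set" and C :: "'e set set" and n :: nat and Q :: "'e set set set"
  assumes "paving n E C"
    and "tame n E C"
    and "CARD('n::finite) = n"
    and "partition_on (dep_hyps n E C) Q"
    and "nice TYPE('n) n (dep_hyps n E C) Q"
  shows "(\<forall>l\<in>dep_hyps n E C. mrank (MQ_circuits n E Q) l = n - 1)
       \<and> (\<forall>Qi\<in>Q. \<forall>Qj\<in>Q. Qi \<noteq> Qj \<longrightarrow>
            (\<forall>l1\<in>Qi. \<forall>l2\<in>Qj. mrank (MQ_circuits n E Q) (l1 \<union> l2) = n))"
proof -
  interpret tame_partitioned_paving n E C Q
  proof
    show "paving n E C" "tame n E C" "partition_on (dep_hyps n E C) Q" by fact+
    have "\<forall>Qi\<in>Q. \<forall>l\<in>dep_hyps n E C. l \<notin> Qi \<longrightarrow> \<not> l \<subseteq> \<Union>Qi"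
      using assms(5) unfolding nice_def by (elim conjE)
    then show "\<And>Qi l. Qi \<in> Q \<Longrightarrow> l \<in> dep_hyps n E C \<Longrightarrow> l \<notin> Qi \<Longrightarrow> \<not> l \<subseteq> \<Union>Qi"
      by blast
    have "0 < CARD('n)" by simp
    then show "1 \<le> n" using assms(3) by simp
  qed
  show ?thesis using mrank_MQ_dep_hyp mrank_MQ_Un_dep_hyps_of_distinct_parts by blast
qed

end
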